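(* There is a universal constant $c>0$ such that the following holds. Fix $0<\epsilon<1/8$. There exist a measurable space $\mathcal X$, a probability measure $\nu$ on $\mathcal X$ and a family $\mathcal U$ of probability measures on $\mathcal X$ such that for all $\mu\in\mathcal U$, $\nu\ll\mu$ and $\left\|\frac{d\nu}{d\mu}\right\|_\infty\le 4$, and such that the following holds. Any estimator $\widehat Z$ that, for every $\mu\in\mathcal U$ and every $Z>0$, given i.i.d. $X_1,\dots,X_n\sim\mu$ and the values $\lambda(X_i)$ of $\lambda=Z\cdot\frac{d\nu}{d\mu}$, satisfies $(1-\epsilon)Z\le\widehat Z\le(1+\epsilon)Z$ with probability at least $2/3$, must use $n\ge c/\epsilon^2$ samples.
   Context: An estimator is a measurable function of $(X_1,\dots,X_n,\lambda(X_1),\dots,\lambda(X_n))$ with no other access to $\mu$, $\lambda$ or $Z$. *)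

theory Defs
  imports "HOL-Probability.Probability"
begin

end

theory Submission
  imports Defs
begin

text \<open>
Take the two-point space \<open>{0, 1}\<close>, \<open>\<nu>\<close> the point mass at 1 and \<open>U\<close> the Bernoulli laws with
parameters \<open>1/2\<close> and \<open>(1 + 4\<epsilon>)/2\<close>. For \<open>\<mu> = Bernoulli(p)\<close> and \<open>Z = p\<close> the weights
\<open>\<lambda>(X\<^sub>i) = p \<cdot> d\<nu>/d\<mu>(X\<^sub>i)\<close> are the indicators of \<open>X\<^sub>i = 1\<close>, whatever \<open>p\<close> is. So an
estimator that succeeds for both laws is a test between their \<open>n\<close>-fold products, with disjoint
acceptance regions. Such a test forces the Bhattacharyya coefficient \<open>\<integral> sqrt (dQ/dP) dP\<close> of the
two products to be at most \<open>17/18\<close>. The coefficient tensorises to \<open>\<beta>\<^sup>n\<close> with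
\<open>\<beta> = (sqrt (1 + 4\<epsilon>) + sqrt (1 - 4\<epsilon>))/2 \<ge> 1 - 8\<epsilon>\<^sup>2\<close>, and Bernoulli's inequality gives
\<open>n \<epsilon>\<^sup>2 \<ge> 1/144\<close>.
\<close>

lemma PiM_density:
  fixes M :: "'a measure" and g :: "'a \<Rightarrow> ennreal"
  assumes fin: "finite I" and g[measurable]: "g \<in> borel_measurable M"
    and "sigma_finite_measure M" and "sigma_finite_measure (density M g)"
  shows "PiM I (\<lambda>_. density M g) = density (PiM I (\<lambda>_. M)) (\<lambda>x. \<Prod>i\<in>I. g (x i))"
proof -
  interpret D: product_sigma_finite "\<lambda>_. density M g"
    using assms by (simp add: product_sigma_finite_def)
  interpret M: product_sigma_finite "\<lambda>_. M"
    using assms by (simp add: product_sigma_finite_def)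
  show ?thesis
  proof (rule D.PiM_eqI[symmetric, OF fin])
    show "sets (density (PiM I (\<lambda>_. M)) (\<lambda>x. \<Prod>i\<in>I. g (x i))) = sets (PiM I (\<lambda>_. density M g))"
      by (simp, intro sets_PiM_cong) auto
  next
    fix A assume "\<And>i. i \<in> I \<Longrightarrow> A i \<in> sets (density M g)"
    then have A[measurable]: "\<And>i. i \<in> I \<Longrightarrow> A i \<in> sets M" by simp
    have "emeasure (density (PiM I (\<lambda>_. M)) (\<lambda>x. \<Prod>i\<in>I. g (x i))) (PiE I A)
        = (\<integral>\<^sup>+x. (\<Prod>i\<in>I. g (x i) * indicator (A i) (x i)) \<partial>PiM I (\<lambda>_. M))"
    proof -
      have "indicator (PiE I A) x = (\<Prod>i\<in>I. indicator (A i) (x i) :: ennreal)"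
        if "x \<in> extensional I" for x
        using that fin by (auto simp: indicator_def PiE_def Pi_def)
      moreover have "PiE I A \<in> sets (PiM I (\<lambda>_. M))"
        using fin A by (intro sets_PiM_I_finite) auto
      ultimately show ?thesis
        by (subst emeasure_density) (auto simp: prod.distrib space_PiM PiE_def
            intro!: nn_integral_cong)
    qed
    also have "\<dots> = (\<Prod>i\<in>I. \<integral>\<^sup>+y. g y * indicator (A i) y \<partial>M)"
      by (rule M.product_nn_integral_prod[OF fin]) measurable
    also have "\<dots> = (\<Prod>i\<in>I. emeasure (density M g) (A i))"
      by (auto simp: emeasure_density intro!: prod.cong)
    finally show "emeasure (density (PiM I (\<lambda>_. M)) (\<lambda>x. \<Prod>i\<in>I. g (x i))) (PiE I A)
        = (\<Prod>i\<in>I. emeasure (density M g) (A i))" .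
  qed
qed

lemma real_sqrt_prod: "sqrt (prod f A) = (\<Prod>i\<in>A. sqrt (f i))"
  by (induction A rule: infinite_finite_induct) (auto simp: real_sqrt_mult)

lemma nn_integral_sqrt_prod_PiM:
  assumes "finite I" "sigma_finite_measure M" and [measurable]: "f \<in> borel_measurable M"
    and f_nonneg: "\<And>x. 0 \<le> f x"
  shows "(\<integral>\<^sup>+x. ennreal (sqrt (\<Prod>i\<in>I. f (x i))) \<partial>PiM I (\<lambda>_. M))
       = (\<integral>\<^sup>+x. ennreal (sqrt (f x)) \<partial>M) ^ card I"
proof -
  interpret product_sigma_finite "\<lambda>_. M"
    using assms by (simp add: product_sigma_finite_def)
  have "(\<integral>\<^sup>+x. ennreal (sqrt (\<Prod>i\<in>I. f (x i))) \<partial>PiM I (\<lambda>_. M))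
      = (\<integral>\<^sup>+x. (\<Prod>i\<in>I. ennreal (sqrt (f (x i)))) \<partial>PiM I (\<lambda>_. M))"
    by (simp add: real_sqrt_prod prod_ennreal f_nonneg)
  also have "\<dots> = (\<Prod>i\<in>I. \<integral>\<^sup>+x. ennreal (sqrt (f x)) \<partial>M)"
    by (rule product_nn_integral_prod) (use assms in auto)
  finally show ?thesis by simp
qed

lemma real_sqrt_le_add_divide:
  fixes x a :: real
  assumes "0 \<le> x" "0 < a"
  shows "sqrt x \<le> a + x / (4 * a)"
proof -
  have "0 \<le> (sqrt x - 2 * a)\<^sup>2" by simp
  also have "\<dots> = x + 4 * a\<^sup>2 - 4 * a * sqrt x"
    using assms by (simp add: power2_eq_square algebra_simps)
  finally show ?thesis
    using assms by (simp add: field_simps power2_eq_square)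
qed

lemma sqrt_one_plus_add_sqrt_one_minus_ge:
  fixes u :: real
  assumes "0 \<le> u" "u \<le> 1"
  shows "2 - u\<^sup>2 \<le> sqrt (1 + u) + sqrt (1 - u)"
proof (rule power2_le_imp_le)
  have u2: "0 \<le> u\<^sup>2" "u\<^sup>2 \<le> 1"
    using assms by (auto simp: power2_eq_square mult_le_one)
  have "sqrt (1 + u) * sqrt (1 - u) = sqrt (1 - u\<^sup>2)"
    by (simp add: real_sqrt_mult[symmetric] power2_eq_square algebra_simps)
  moreover have "1 - u\<^sup>2 \<le> sqrt (1 - u\<^sup>2)"
    using u2 by (intro real_le_rsqrt) (simp add: power2_eq_square mult_left_le_one_le)
  ultimately have "4 - 2 * u\<^sup>2 \<le> (sqrt (1 + u) + sqrt (1 - u))\<^sup>2"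
    using assms by (simp add: power2_sum)
  moreover have "u\<^sup>2 * u\<^sup>2 \<le> u\<^sup>2"
    using u2 by (intro mult_left_le_one_le)
  moreover have "(2 - u\<^sup>2)\<^sup>2 = 4 - 4 * u\<^sup>2 + u\<^sup>2 * u\<^sup>2"
    by (simp add: power2_diff power2_eq_square[of "u\<^sup>2"])
  ultimately show "(2 - u\<^sup>2)\<^sup>2 \<le> (sqrt (1 + u) + sqrt (1 - u))\<^sup>2"
    using u2 by linarith
qed (use assms in simp)

lemma nn_integral_affine_indicator:
  fixes L :: "'a \<Rightarrow> real"
  assumes [measurable]: "L \<in> borel_measurable M" "A \<in> sets M"
    and "\<And>x. 0 \<le> L x" "0 \<le> c" "0 \<le> d"
  shows "(\<integral>\<^sup>+x. ennreal ((c + d * L x) * indicator A x) \<partial>M)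
       = c * emeasure M A + d * emeasure (density M (\<lambda>x. ennreal (L x))) A"
proof -
  have "ennreal ((c + d * L x) * indicator A x)
      = ennreal c * indicator A x + ennreal d * (ennreal (L x) * indicator A x)" for x
    using assms ennreal_plus[of c "d * L x"] by (auto simp: indicator_def ennreal_mult)
  then have "(\<integral>\<^sup>+x. ennreal ((c + d * L x) * indicator A x) \<partial>M)
      = (\<integral>\<^sup>+x. ennreal c * indicator A x + ennreal d * (ennreal (L x) * indicator A x) \<partial>M)"
    by simp
  also have "\<dots> = c * emeasure M A + d * emeasure (density M (\<lambda>x. ennreal (L x))) A"
    by (simp add: nn_integral_add nn_integral_cmult emeasure_density)
  finally show ?thesis .
qed

lemma nn_integral_sqrt_density_le_of_disjoint:
  fixes P :: "'a measure" and L :: "'a \<Rightarrow> real"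
  defines "Q \<equiv> density P (\<lambda>x. ennreal (L x))"
  assumes "prob_space P" "prob_space Q"
    and [measurable]: "L \<in> borel_measurable P" and L_nonneg: "\<And>x. 0 \<le> L x"
    and [measurable]: "S \<in> sets P" "T \<in> sets P" and "S \<inter> T = {}"
    and "2/3 \<le> measure P S" "2/3 \<le> measure Q T"
  shows "(\<integral>\<^sup>+x. ennreal (sqrt (L x)) \<partial>P) \<le> ennreal (17/18)"
proof -
  interpret P: prob_space P by fact
  interpret Q: prob_space Q by fact
  define S' where "S' = space P - S"
  have [measurable]: "S' \<in> sets P" and sets_Q: "sets Q = sets P"
    by (auto simp: S'_def Q_def)
  have "sqrt (L x) \<le> (1/3 + 3/4 * L x) * indicator S x + (3/4 + 1/3 * L x) * indicator S' x"
    if "x \<in> space P" for x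
    using that real_sqrt_le_add_divide[OF L_nonneg, of "1/3" x]
      real_sqrt_le_add_divide[OF L_nonneg, of "3/4" x]
    by (auto simp: S'_def indicator_def)
  then have "(\<integral>\<^sup>+x. ennreal (sqrt (L x)) \<partial>P)
      \<le> (\<integral>\<^sup>+x. ennreal ((1/3 + 3/4 * L x) * indicator S x)
              + ennreal ((3/4 + 1/3 * L x) * indicator S' x) \<partial>P)"
    using L_nonneg by (intro nn_integral_mono) (simp add: ennreal_plus[symmetric] del: ennreal_plus)
  also have "\<dots> = (\<integral>\<^sup>+x. ennreal ((1/3 + 3/4 * L x) * indicator S x) \<partial>P)
                   + (\<integral>\<^sup>+x. ennreal ((3/4 + 1/3 * L x) * indicator S' x) \<partial>P)"
    by (rule nn_integral_add) auto
  also have "\<dots> = ennreal (1/3 * measure P S + 3/4 * measure Q S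
                         + (3/4 * measure P S' + 1/3 * measure Q S'))"
    using L_nonneg sets_Q
    by (subst (1 2) nn_integral_affine_indicator)
      (simp_all add: Q_def[symmetric] P.emeasure_eq_measure Q.emeasure_eq_measure
        ennreal_mult'[symmetric])
  also have "\<dots> \<le> ennreal (17/18)"
  proof (rule ennreal_leI)
    have "measure P S' = 1 - measure P S"
      unfolding S'_def by (simp add: P.prob_compl)
    moreover have "measure Q S' = 1 - measure Q S"
      using sets_Q Q.prob_compl[of S] by (simp add: S'_def Q_def)
    moreover have "measure Q S + measure Q T \<le> 1"
      using Q.finite_measure_Union[of S T] Q.prob_le_1[of "S \<union> T"] \<open>S \<inter> T = {}\<close> sets_Q
      by simp
    ultimately show "1/3 * measure P S + 3/4 * measure Q S
                     + (3/4 * measure P S' + 1/3 * measure Q S') \<le> 17/18"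
      using assms(9,10) by linarith
  qed
  finally show ?thesis .
qed

definition bern :: "real \<Rightarrow> real measure" where
  "bern p = density (count_space {0, 1}) (\<lambda>x. ennreal (if x = 1 then p else 1 - p))"

definition bern_ratio :: "real \<Rightarrow> real \<Rightarrow> real \<Rightarrow> real" where
  "bern_ratio p q x = (if x = 1 then q / p else (1 - q) / (1 - p))"

lemma space_bern [simp]: "space (bern p) = {0, 1}"
  and sets_bern [simp]: "sets (bern p) = Pow {0, 1}"
  by (simp_all add: bern_def)

lemma borel_measurable_bern [measurable]: "f \<in> borel_measurable (bern p)"
  by (simp add: bern_def)

lemma sets_PiM_bern: "sets (PiM I (\<lambda>_. bern p)) = sets (PiM I (\<lambda>_. count_space {0, 1}))"
  by (rule sets_PiM_cong) simp_all

lemma space_PiM_bern: "space (PiM I (\<lambda>_. bern p)) = space (PiM I (\<lambda>_. count_space {0, 1}))"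
  by (simp add: space_PiM)

lemma prob_space_bern: "0 \<le> p \<Longrightarrow> p \<le> 1 \<Longrightarrow> prob_space (bern p)"
  by (rule prob_spaceI)
    (simp add: bern_def emeasure_density nn_integral_count_space_finite ennreal_plus[symmetric]
      del: ennreal_plus)

lemma AE_bern: "0 < p \<Longrightarrow> p < 1 \<Longrightarrow> (AE x in bern p. P x) \<longleftrightarrow> P 0 \<and> P 1"
  unfolding bern_def by (subst AE_density) (auto simp: AE_count_space)

lemma bern_ratio_nonneg: "0 \<le> p \<Longrightarrow> p \<le> 1 \<Longrightarrow> 0 \<le> q \<Longrightarrow> q \<le> 1 \<Longrightarrow> 0 \<le> bern_ratio p q x"
  by (simp add: bern_ratio_def)

lemma density_bern_ratio:
  assumes "0 < p" "p < 1"
  shows "density (bern p) (\<lambda>x. ennreal (bern_ratio p q x)) = bern q"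
  unfolding bern_def using assms
  by (subst density_density_eq)
    (auto simp: bern_ratio_def ennreal_mult'[symmetric] AE_count_space intro!: density_cong)

lemma RN_deriv_bern:
  assumes "0 < p" "p < 1" "x \<in> {0, 1}"
  shows "RN_deriv (bern p) (bern q) x = ennreal (bern_ratio p q x)"
proof -
  interpret prob_space "bern p"
    using assms by (intro prob_space_bern) auto
  have "AE x in bern p. ennreal (bern_ratio p q x) = RN_deriv (bern p) (bern q) x"
    by (rule RN_deriv_unique) (auto simp: density_bern_ratio assms)
  then show ?thesis
    using assms by (auto simp: AE_bern)
qed

lemma absolutely_continuous_bern:
  "0 < p \<Longrightarrow> p < 1 \<Longrightarrow> absolutely_continuous (bern p) (bern q)"
  using absolutely_continuousI_density[of "\<lambda>x. ennreal (bern_ratio p q x)" "bern p"]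
  by (simp add: density_bern_ratio)

lemma AE_RN_deriv_bern_one_le:
  assumes "1/4 \<le> p" "p < 1"
  shows "AE x in bern p. RN_deriv (bern p) (bern 1) x \<le> 4"
proof -
  have "ennreal (bern_ratio p 1 x) \<le> ennreal 4" for x
    using assms by (intro ennreal_leI) (simp add: bern_ratio_def field_simps)
  then show ?thesis
    using assms by (simp add: AE_bern RN_deriv_bern)
qed

lemma nn_integral_sqrt_bern_ratio:
  assumes "0 < p" "p < 1" "0 \<le> q" "q \<le> 1"
  shows "(\<integral>\<^sup>+x. ennreal (sqrt (bern_ratio p q x)) \<partial>bern p)
       = ennreal (sqrt (p * q) + sqrt ((1 - p) * (1 - q)))"
proof -
  have sqrt_eq: "a * sqrt (b / a) = sqrt (a * b)" if "0 < a" for a b :: real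
    using that by (simp add: real_sqrt_divide real_sqrt_mult real_div_sqrt flip: times_divide_eq_left)
  have "(\<integral>\<^sup>+x. ennreal (sqrt (bern_ratio p q x)) \<partial>bern p)
      = ennreal (p * sqrt (q / p)) + ennreal ((1 - p) * sqrt ((1 - q) / (1 - p)))"
    using assms
    by (simp add: bern_def nn_integral_density nn_integral_count_space_finite bern_ratio_def
        ennreal_mult'[symmetric] add.commute)
  then show ?thesis
    using assms by (simp add: sqrt_eq)
qed

lemma PiM_bern_eq_density:
  assumes "finite I" "0 < p" "p < 1" "0 \<le> q" "q \<le> 1"
  shows "PiM I (\<lambda>_. bern q)
       = density (PiM I (\<lambda>_. bern p)) (\<lambda>x. ennreal (\<Prod>i\<in>I. bern_ratio p q (x i)))"
proof -
  have "PiM I (\<lambda>_. bern q) = PiM I (\<lambda>_. density (bern p) (\<lambda>x. ennreal (bern_ratio p q x)))"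
    using assms by (simp add: density_bern_ratio)
  also have "\<dots> = density (PiM I (\<lambda>_. bern p)) (\<lambda>x. \<Prod>i\<in>I. ennreal (bern_ratio p q (x i)))"
    using assms
    by (intro PiM_density) (auto simp: density_bern_ratio prob_space_imp_sigma_finite prob_space_bern)
  finally show ?thesis
    using assms by (simp add: prod_ennreal bern_ratio_nonneg)
qed

lemma nn_integral_sqrt_PiM_bern_ratio:
  assumes "finite I" "0 < p" "p < 1" "0 \<le> q" "q \<le> 1"
  shows "(\<integral>\<^sup>+x. ennreal (sqrt (\<Prod>i\<in>I. bern_ratio p q (x i))) \<partial>PiM I (\<lambda>_. bern p))
       = ennreal ((sqrt (p * q) + sqrt ((1 - p) * (1 - q))) ^ card I)"
proof -
  have "(\<integral>\<^sup>+x. ennreal (sqrt (\<Prod>i\<in>I. bern_ratio p q (x i))) \<partial>PiM I (\<lambda>_. bern p))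
      = (\<integral>\<^sup>+x. ennreal (sqrt (bern_ratio p q x)) \<partial>bern p) ^ card I"
    using assms by (intro nn_integral_sqrt_prod_PiM)
      (auto simp: bern_ratio_nonneg prob_space_imp_sigma_finite prob_space_bern)
  also have "\<dots> = ennreal (sqrt (p * q) + sqrt ((1 - p) * (1 - q))) ^ card I"
    using assms by (simp only: nn_integral_sqrt_bern_ratio)
  also have "\<dots> = ennreal ((sqrt (p * q) + sqrt ((1 - p) * (1 - q))) ^ card I)"
    using assms by (intro ennreal_power) simp
  finally show ?thesis .
qed

lemma bern_affinity_power_le_of_disjoint:
  assumes "0 < p" "p < 1" "0 \<le> q" "q \<le> 1"
    and S: "S \<in> sets (PiM {..<n} (\<lambda>_. count_space {0, 1}))"
    and T: "T \<in> sets (PiM {..<n} (\<lambda>_. count_space {0, 1}))"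
    and "S \<inter> T = {}"
    and "2/3 \<le> measure (PiM {..<n} (\<lambda>_. bern p)) S"
    and "2/3 \<le> measure (PiM {..<n} (\<lambda>_. bern q)) T"
  shows "(sqrt (p * q) + sqrt ((1 - p) * (1 - q))) ^ n \<le> 17/18"
proof -
  define P where "P = PiM {..<n} (\<lambda>_. bern p)"
  define L where "L x = (\<Prod>i<n. bern_ratio p q (x i))" for x
  have L_nonneg: "0 \<le> L x" for x
    using assms by (auto simp: L_def bern_ratio_nonneg intro: prod_nonneg)
  have Q: "PiM {..<n} (\<lambda>_. bern q) = density P (\<lambda>x. ennreal (L x))"
    using assms unfolding P_def L_def by (intro PiM_bern_eq_density) auto
  have "(\<integral>\<^sup>+x. ennreal (sqrt (L x)) \<partial>P) \<le> ennreal (17/18)"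
  proof (rule nn_integral_sqrt_density_le_of_disjoint[OF _ _ _ L_nonneg])
    show "prob_space P"
      unfolding P_def using assms by (intro prob_space_PiM prob_space_bern) auto
    show "prob_space (density P (\<lambda>x. ennreal (L x)))"
      unfolding Q[symmetric] using assms by (intro prob_space_PiM prob_space_bern) auto
    show "L \<in> borel_measurable P"
      unfolding P_def L_def by measurable
    show "S \<in> sets P" "T \<in> sets P"
      using S T by (simp_all add: P_def sets_PiM_bern)
  qed (use assms Q in \<open>simp_all add: P_def\<close>)
  then show ?thesis
    using assms by (simp add: P_def L_def nn_integral_sqrt_PiM_bern_ratio)
qed

definition normalizer_estimator ::
    "nat \<Rightarrow> real \<Rightarrow> real measure \<Rightarrow> real measure \<Rightarrow> ((nat \<Rightarrow> real) \<times> (nat \<Rightarrow> real) \<Rightarrow> real) \<Rightarrow> bool"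
  where "normalizer_estimator n \<epsilon> \<nu> \<mu> E \<longleftrightarrow>
    (\<forall>Z::real. Z > 0 \<longrightarrow>
      measure (PiM {..<n} (\<lambda>_. \<mu>))
        {xs \<in> space (PiM {..<n} (\<lambda>_. \<mu>)).
           (1 - \<epsilon>) * Z \<le> E (xs, restrict (\<lambda>i. Z * enn2real (RN_deriv \<mu> \<nu> (xs i))) {..<n})
         \<and> E (xs, restrict (\<lambda>i. Z * enn2real (RN_deriv \<mu> \<nu> (xs i))) {..<n}) \<le> (1 + \<epsilon>) * Z}
      \<ge> 2/3)"

lemma normalizer_estimator_bern_accept:
  assumes "normalizer_estimator n \<epsilon> (bern 1) (bern p) E" "0 < p" "p < 1"
  shows "2/3 \<le> measure (PiM {..<n} (\<lambda>_. bern p))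
           ((\<lambda>xs. E (xs, restrict (\<lambda>i. indicator {1} (xs i)) {..<n}))
              -` {(1 - \<epsilon>) * p..(1 + \<epsilon>) * p} \<inter> space (PiM {..<n} (\<lambda>_. count_space {0, 1})))"
    (is "_ \<le> measure _ ?accept")
proof -
  have weights: "restrict (\<lambda>i. p * enn2real (RN_deriv (bern p) (bern 1) (xs i))) {..<n}
      = restrict (\<lambda>i. indicator {1} (xs i)) {..<n}"
    if "xs \<in> space (PiM {..<n} (\<lambda>_. count_space {0, 1}))" for xs
  proof (rule restrict_ext)
    fix i assume "i \<in> {..<n}"
    then have "xs i \<in> {0, 1}"
      using that by (auto simp: space_PiM PiE_def Pi_def)
    then show "p * enn2real (RN_deriv (bern p) (bern 1) (xs i)) = indicator {1} (xs i)"
      using assms(2,3) by (auto simp: RN_deriv_bern bern_ratio_def)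
  qed
  have "2/3 \<le> measure (PiM {..<n} (\<lambda>_. bern p))
      {xs \<in> space (PiM {..<n} (\<lambda>_. bern p)).
         (1 - \<epsilon>) * p \<le> E (xs, restrict (\<lambda>i. p * enn2real (RN_deriv (bern p) (bern 1) (xs i))) {..<n})
       \<and> E (xs, restrict (\<lambda>i. p * enn2real (RN_deriv (bern p) (bern 1) (xs i))) {..<n}) \<le> (1 + \<epsilon>) * p}"
    using assms(1)[unfolded normalizer_estimator_def, rule_format, OF assms(2)] .
  also have "{xs \<in> space (PiM {..<n} (\<lambda>_. bern p)).
         (1 - \<epsilon>) * p \<le> E (xs, restrict (\<lambda>i. p * enn2real (RN_deriv (bern p) (bern 1) (xs i))) {..<n})
       \<and> E (xs, restrict (\<lambda>i. p * enn2real (RN_deriv (bern p) (bern 1) (xs i))) {..<n}) \<le> (1 + \<epsilon>) * p}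
      = ?accept"
    unfolding space_PiM_bern using weights by auto
  finally show ?thesis .
qed

lemma bern_normalizer_estimator_affinity_power_le:
  assumes "E \<in> borel_measurable
      (PiM {..<n} (\<lambda>_. count_space {0, 1}) \<Otimes>\<^sub>M PiM {..<n} (\<lambda>_. borel))"
    and "0 < p" "p < 1" "0 < q" "q < 1" "(1 + \<epsilon>) * p < (1 - \<epsilon>) * q"
    and "normalizer_estimator n \<epsilon> (bern 1) (bern p) E"
    and "normalizer_estimator n \<epsilon> (bern 1) (bern q) E"
  shows "(sqrt (p * q) + sqrt ((1 - p) * (1 - q))) ^ n \<le> 17/18"
proof -
  define F where "F xs = E (xs, restrict (\<lambda>i. indicator {1} (xs i)) {..<n})" for xs
  define accept where "accept r =
    F -` {(1 - \<epsilon>) * r..(1 + \<epsilon>) * r} \<inter> space (PiM {..<n} (\<lambda>_. count_space {0, 1}))" for r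
  have "(\<lambda>xs. (xs, restrict (\<lambda>i. indicator {1} (xs i)) {..<n})) \<in> measurable
      (PiM {..<n} (\<lambda>_. count_space {0, 1}))
      (PiM {..<n} (\<lambda>_. count_space {0, 1}) \<Otimes>\<^sub>M PiM {..<n} (\<lambda>_. borel))"
  proof (intro measurable_Pair measurable_restrict)
    show "(\<lambda>xs. indicator {1} (xs i)) \<in> borel_measurable (PiM {..<n} (\<lambda>_. count_space {0, 1}))"
      if "i \<in> {..<n}" for i
      using measurable_component_singleton[OF that] by (rule measurable_compose) simp
  qed simp
  then have F_measurable: "F \<in> borel_measurable (PiM {..<n} (\<lambda>_. count_space {0, 1}))"
    unfolding F_def using assms(1) by (rule measurable_compose)
  have "accept r \<in> sets (PiM {..<n} (\<lambda>_. count_space {0, 1}))" for r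
    unfolding accept_def by (intro measurable_sets[OF F_measurable]) simp
  moreover have "accept p \<inter> accept q = {}"
    using assms(6) by (auto simp: accept_def)
  moreover have "2/3 \<le> measure (PiM {..<n} (\<lambda>_. bern p)) (accept p)"
    unfolding accept_def F_def using assms(2,3) by (rule normalizer_estimator_bern_accept[OF assms(7)])
  moreover have "2/3 \<le> measure (PiM {..<n} (\<lambda>_. bern q)) (accept q)"
    unfolding accept_def F_def using assms(4,5) by (rule normalizer_estimator_bern_accept[OF assms(8)])
  ultimately show ?thesis
    using assms(2-5) by (intro bern_affinity_power_le_of_disjoint[of p q]) auto
qed

lemma bern_normalizer_estimator_sample_bound:
  assumes "0 < \<epsilon>" "\<epsilon> < 1/8"
    and "E \<in> borel_measurable
      (PiM {..<n} (\<lambda>_. count_space {0, 1}) \<Otimes>\<^sub>M PiM {..<n} (\<lambda>_. borel))"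
    and "\<forall>\<mu>\<in>{bern (1/2), bern ((1 + 4 * \<epsilon>) / 2)}. normalizer_estimator n \<epsilon> (bern 1) \<mu> E"
  shows "1/144 / \<epsilon>\<^sup>2 \<le> real n"
proof -
  define \<beta> where "\<beta> = sqrt (1/2 * ((1 + 4 * \<epsilon>) / 2)) + sqrt ((1 - 1/2) * (1 - (1 + 4 * \<epsilon>) / 2))"
  have "(1 + \<epsilon>) * (1/2) < (1 - \<epsilon>) * ((1 + 4 * \<epsilon>) / 2)"
  proof -
    have "\<epsilon> * \<epsilon> < \<epsilon> * (1/2)"
      using assms(1,2) by (intro mult_strict_left_mono) auto
    moreover have "(1 - \<epsilon>) * ((1 + 4 * \<epsilon>) / 2) - (1 + \<epsilon>) * (1/2) = \<epsilon> - 2 * (\<epsilon> * \<epsilon>)"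
      by (simp add: field_simps)
    ultimately show ?thesis
      by linarith
  qed
  moreover have "normalizer_estimator n \<epsilon> (bern 1) (bern (1/2)) E"
    "normalizer_estimator n \<epsilon> (bern 1) (bern ((1 + 4 * \<epsilon>) / 2)) E"
    using assms(4) by simp_all
  ultimately have "\<beta> ^ n \<le> 17/18"
    unfolding \<beta>_def using assms(1,2)
    by (intro bern_normalizer_estimator_affinity_power_le[OF assms(3)]) auto
  moreover have "1 - 8 * \<epsilon>\<^sup>2 \<le> \<beta>"
  proof -
    have "\<beta> = (sqrt (1 + 4 * \<epsilon>) + sqrt (1 - 4 * \<epsilon>)) / 2"
      unfolding \<beta>_def by (simp add: real_sqrt_divide field_simps)
    then show ?thesis
      using sqrt_one_plus_add_sqrt_one_minus_ge[of "4 * \<epsilon>"] assms(1,2)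
      by (simp add: power_mult_distrib)
  qed
  moreover have "\<epsilon>\<^sup>2 \<le> 1/64"
    using assms(1,2) power_mono[of \<epsilon> "1/8" 2] by (simp add: power_divide)
  then have "1 + real n * (- (8 * \<epsilon>\<^sup>2)) \<le> (1 + - (8 * \<epsilon>\<^sup>2)) ^ n"
    by (intro Bernoulli_inequality) simp
  moreover have "(1 - 8 * \<epsilon>\<^sup>2) ^ n \<le> \<beta> ^ n"
    using calculation \<open>\<epsilon>\<^sup>2 \<le> 1/64\<close> by (intro power_mono) auto
  ultimately have "1/144 \<le> real n * \<epsilon>\<^sup>2"
    by simp
  then show ?thesis
    using assms(1) by (simp add: pos_divide_le_eq)
qed

theorem proposition12:
  shows "\<exists>c::real>0. \<forall>\<epsilon>::real. 0 < \<epsilon> \<and> \<epsilon> < 1/8 \<longrightarrow>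
    (\<exists>(M::real measure) (\<nu>::real measure) (U::real measure set).
      prob_space \<nu> \<and> sets \<nu> = sets M \<and>
      (\<forall>\<mu>\<in>U. prob_space \<mu> \<and> sets \<mu> = sets M \<and>
              absolutely_continuous \<mu> \<nu> \<and>
              (AE x in \<mu>. RN_deriv \<mu> \<nu> x \<le> 4)) \<and>
      (\<forall>(n::nat) (E :: (nat \<Rightarrow> real) \<times> (nat \<Rightarrow> real) \<Rightarrow> real).
         E \<in> borel_measurable (PiM {..<n} (\<lambda>_. M) \<Otimes>\<^sub>M PiM {..<n} (\<lambda>_. borel)) \<and>
         (\<forall>\<mu>\<in>U. \<forall>Z::real. Z > 0 \<longrightarrow>
            measure (PiM {..<n} (\<lambda>_. \<mu>))
              {xs \<in> space (PiM {..<n} (\<lambda>_. \<mu>)).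
                 (1 - \<epsilon>) * Z \<le> E (xs, restrict (\<lambda>i. Z * enn2real (RN_deriv \<mu> \<nu> (xs i))) {..<n})
               \<and> E (xs, restrict (\<lambda>i. Z * enn2real (RN_deriv \<mu> \<nu> (xs i))) {..<n}) \<le> (1 + \<epsilon>) * Z}
            \<ge> 2/3)
         \<longrightarrow> real n \<ge> c / \<epsilon>\<^sup>2))"
proof (intro exI[of _ "1/144"] conjI allI impI, goal_cases)
  case (2 \<epsilon>)
  then have \<epsilon>: "0 < \<epsilon>" "\<epsilon> < 1/8" by auto
  let ?U = "{bern (1/2), bern ((1 + 4 * \<epsilon>) / 2)}"
  have family: "prob_space (bern p) \<and> sets (bern p) = sets (count_space {0, 1})
      \<and> absolutely_continuous (bern p) (bern 1) \<and> (AE x in bern p. RN_deriv (bern p) (bern 1) x \<le> 4)"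
    if "1/4 \<le> p" "p < 1" for p
    using that by (simp add: prob_space_bern absolutely_continuous_bern AE_RN_deriv_bern_one_le)
  show ?case
  proof (rule exI[of _ "count_space {0, 1}"], rule exI[of _ "bern 1"], rule exI[of _ ?U],
      intro conjI, goal_cases)
    case 4
    show ?case
      by (intro allI impI, elim conjE)
        (rule bern_normalizer_estimator_sample_bound[OF \<epsilon>, unfolded normalizer_estimator_def])
  qed (use family[of "1/2"] family[of "(1 + 4 * \<epsilon>) / 2"] \<epsilon> in \<open>simp_all add: prob_space_bern\<close>)
qed simp

end
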